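(* Let $(M,\circ,\mathrm{OR})$ be a free $\mathbb{D}$-module of rank 3 with scalar product and orientation, and let $z_1,z_2,z_3\in M\setminus\epsilon M$ be pairwise $\mathbb{D}$-linearly independent (equivalently, no two of their axes are parallel). Then the following are equivalent: (i) $z_1\times z_2\circ z_3=0$; (ii) some $z_i$ is a $\mathbb{D}$-linear combination of the other two; (iii) the three axes intersect orthogonally a common line of $E$. If these hold, then every $z_i$ is a $\mathbb{D}$-linear combination of the other two.
   Context: $\mathbb{D}=\{a+\epsilon b: a,b\in\mathbb{R}\}$, $\epsilon^2=0$. Scalar product: symmetric $\mathbb{D}$-bilinear $\circ:M\times M\to\mathbb{D}$ with $\mathfrak{Re}(x\circ x)\ge0$, equality iff $x\in\epsilon M$; orientation: one of the two classes of ordered bases under $\{b'_j=A_{jk}b_k\}\sim\{b_k\}$ iff $\det\mathfrak{Re}(A)>0$. Cross product $x\times y=x^iy^j\epsilon_{ijk}m_k$ in any positive orthonormal basis $\{m_i\}$; $z_1\times z_2\circ z_3:=(z_1\times z_2)\circ z_3$. $V=M/\epsilon M$, $\pi$ the quotient map. $E$ is the set of real 3-dimensional subspaces $P\subset M$ with $\mathfrak{Du}(x\circ y)=0$ for $x,y\in P$ and $P\cap\epsilon M=\{0\}$, a Euclidean affine space over $V$ (with $B-A:=d^ke_k$ where $e^B_i=e^A_i+\epsilon\,\epsilon_{ijk}d^ke^A_j$, $\{e_i\}$ positive orthonormal in $V$, $e^P_i\in P$ its lift). Each $z\in M\setminus\epsilon M$ is uniquely $z=(a+\epsilon b)u$ with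 $a>0$, $b\in\mathbb{R}$, $u\circ u=1$; its axis is the line $\{P\in E: u\in P\}$, with direction $\pi(u)$. *)

theory Defs
  imports Complex_Main
begin

datatype dual = Dual (re: real) (du: real)

instantiation dual :: comm_ring_1
begin
definition "zero_dual = Dual 0 0"
definition "one_dual = Dual 1 0"
definition "plus_dual x y = Dual (re x + re y) (du x + du y)"
definition "minus_dual x y = Dual (re x - re y) (du x - du y)"
definition "uminus_dual x = Dual (- re x) (- du x)"
definition "times_dual x y = Dual (re x * re y) (re x * du y + du x * re y)"
instance
  by standard (auto simp: zero_dual_def one_dual_def plus_dual_def minus_dual_def
      uminus_dual_def times_dual_def algebra_simps dual.expand)
end

definition eps :: dual where "eps = Dual 0 1"

definition dreal :: "real \<Rightarrow> dual" where "dreal r = Dual r 0"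

definition epsM :: "(dual \<Rightarrow> 'm::ab_group_add \<Rightarrow> 'm) \<Rightarrow> 'm set" where
  "epsM smul = range (smul eps)"

definition is_dbasis :: "(dual \<Rightarrow> 'm::ab_group_add \<Rightarrow> 'm) \<Rightarrow> (nat \<Rightarrow> 'm) \<Rightarrow> bool" where
  "is_dbasis smul b \<longleftrightarrow>
     (\<forall>x. \<exists>c. x = (\<Sum>i<3. smul (c i) (b i))) \<and>
     (\<forall>c. (\<Sum>i<3. smul (c i) (b i)) = 0 \<longrightarrow> (\<forall>i<3. c i = 0))"

definition free_rank3 :: "(dual \<Rightarrow> 'm::ab_group_add \<Rightarrow> 'm) \<Rightarrow> bool" where
  "free_rank3 smul \<longleftrightarrow> (\<exists>b. is_dbasis smul b)"

definition scalar_product ::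
  "(dual \<Rightarrow> 'm::ab_group_add \<Rightarrow> 'm) \<Rightarrow> ('m \<Rightarrow> 'm \<Rightarrow> dual) \<Rightarrow> bool" where
  "scalar_product smul sp \<longleftrightarrow>
     (\<forall>x y. sp x y = sp y x) \<and>
     (\<forall>x y z. sp (x + y) z = sp x z + sp y z) \<and>
     (\<forall>a x y. sp (smul a x) y = a * sp x y) \<and>
     (\<forall>x. re (sp x x) \<ge> 0) \<and>
     (\<forall>x. re (sp x x) = 0 \<longleftrightarrow> x \<in> epsM smul)"

definition det3 :: "(nat \<Rightarrow> nat \<Rightarrow> real) \<Rightarrow> real" where
  "det3 A = A 0 0 * (A 1 1 * A 2 2 - A 1 2 * A 2 1)
          - A 0 1 * (A 1 0 * A 2 2 - A 1 2 * A 2 0)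
          + A 0 2 * (A 1 0 * A 2 1 - A 1 1 * A 2 0)"

definition same_orient ::
  "(dual \<Rightarrow> 'm::ab_group_add \<Rightarrow> 'm) \<Rightarrow> (nat \<Rightarrow> 'm) \<Rightarrow> (nat \<Rightarrow> 'm) \<Rightarrow> bool" where
  "same_orient smul b' b \<longleftrightarrow>
     (\<exists>A. (\<forall>j<3. b' j = (\<Sum>k<3. smul (A j k) (b k))) \<and> det3 (\<lambda>j k. re (A j k)) > 0)"

definition orientation ::
  "(dual \<Rightarrow> 'm::ab_group_add \<Rightarrow> 'm) \<Rightarrow> (nat \<Rightarrow> 'm) set \<Rightarrow> bool" where
  "orientation smul OR \<longleftrightarrow>
     (\<exists>b0. is_dbasis smul b0 \<and> OR = {b. is_dbasis smul b \<and> same_orient smul b b0})"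

definition orthonormal :: "('m \<Rightarrow> 'm \<Rightarrow> dual) \<Rightarrow> (nat \<Rightarrow> 'm) \<Rightarrow> bool" where
  "orthonormal sp m \<longleftrightarrow> (\<forall>i<3. \<forall>j<3. sp (m i) (m j) = (if i = j then 1 else 0))"

definition pos_orthonormal ::
  "(dual \<Rightarrow> 'm::ab_group_add \<Rightarrow> 'm) \<Rightarrow> ('m \<Rightarrow> 'm \<Rightarrow> dual) \<Rightarrow> (nat \<Rightarrow> 'm) set
     \<Rightarrow> (nat \<Rightarrow> 'm) \<Rightarrow> bool" where
  "pos_orthonormal smul sp OR m \<longleftrightarrow> is_dbasis smul m \<and> orthonormal sp m \<and> m \<in> OR"

text \<open>A fixed positive orthonormal basis (the constructions below do not depend on the choice).\<close>
definition pob ::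
  "(dual \<Rightarrow> 'm::ab_group_add \<Rightarrow> 'm) \<Rightarrow> ('m \<Rightarrow> 'm \<Rightarrow> dual) \<Rightarrow> (nat \<Rightarrow> 'm) set \<Rightarrow> nat \<Rightarrow> 'm" where
  "pob smul sp OR = (SOME m. pos_orthonormal smul sp OR m)"

definition levi :: "nat \<Rightarrow> nat \<Rightarrow> nat \<Rightarrow> real" where
  "levi i j k =
     (if (i, j, k) \<in> {(0, 1, 2), (1, 2, 0), (2, 0, 1)} then 1
      else if (i, j, k) \<in> {(0, 2, 1), (2, 1, 0), (1, 0, 2)} then -1 else 0)"

definition cross ::
  "(dual \<Rightarrow> 'm::ab_group_add \<Rightarrow> 'm) \<Rightarrow> ('m \<Rightarrow> 'm \<Rightarrow> dual) \<Rightarrow> (nat \<Rightarrow> 'm) set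
     \<Rightarrow> 'm \<Rightarrow> 'm \<Rightarrow> 'm" where
  "cross smul sp OR x y =
     (let m = pob smul sp OR in
      (\<Sum>k<3. smul (\<Sum>i<3. \<Sum>j<3. sp x (m i) * sp y (m j) * dreal (levi i j k)) (m k)))"

definition real_subspace :: "(dual \<Rightarrow> 'm::ab_group_add \<Rightarrow> 'm) \<Rightarrow> 'm set \<Rightarrow> bool" where
  "real_subspace smul P \<longleftrightarrow>
     0 \<in> P \<and> (\<forall>x\<in>P. \<forall>y\<in>P. x + y \<in> P) \<and> (\<forall>r. \<forall>x\<in>P. smul (dreal r) x \<in> P)"

definition real_dim3 :: "(dual \<Rightarrow> 'm::ab_group_add \<Rightarrow> 'm) \<Rightarrow> 'm set \<Rightarrow> bool" where
  "real_dim3 smul P \<longleftrightarrow>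
     (\<exists>v :: nat \<Rightarrow> 'm. (\<forall>i<3. v i \<in> P) \<and>
          (\<forall>x\<in>P. \<exists>c :: nat \<Rightarrow> real. x = (\<Sum>i<3. smul (dreal (c i)) (v i))) \<and>
          (\<forall>c :: nat \<Rightarrow> real. (\<Sum>i<3. smul (dreal (c i)) (v i)) = 0 \<longrightarrow> (\<forall>i<3. c i = 0)))"

definition Espace ::
  "(dual \<Rightarrow> 'm::ab_group_add \<Rightarrow> 'm) \<Rightarrow> ('m \<Rightarrow> 'm \<Rightarrow> dual) \<Rightarrow> 'm set set" where
  "Espace smul sp =
     {P. real_subspace smul P \<and> real_dim3 smul P \<and>
         (\<forall>x\<in>P. \<forall>y\<in>P. du (sp x y) = 0) \<and> P \<inter> epsM smul = {0}}"

text \<open>The lift to P of the class pi(x) in V = M / eps M.\<close>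
definition lift :: "(dual \<Rightarrow> 'm::ab_group_add \<Rightarrow> 'm) \<Rightarrow> 'm set \<Rightarrow> 'm \<Rightarrow> 'm" where
  "lift smul P x = (THE y. y \<in> P \<and> y - x \<in> epsM smul)"

text \<open>diffE B A v: "B - A = pi(v)" in V, where B - A = d^k e_k with
  e^B_i = e^A_i + eps eps_ijk d^k e^A_j, e_i = pi(m_i) for the positive orthonormal basis m.\<close>
definition diffE ::
  "(dual \<Rightarrow> 'm::ab_group_add \<Rightarrow> 'm) \<Rightarrow> ('m \<Rightarrow> 'm \<Rightarrow> dual) \<Rightarrow> (nat \<Rightarrow> 'm) set
     \<Rightarrow> 'm set \<Rightarrow> 'm set \<Rightarrow> 'm \<Rightarrow> bool" where
  "diffE smul sp OR B A v \<longleftrightarrow>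
     (let m = pob smul sp OR in
      \<exists>d :: nat \<Rightarrow> real.
        v - (\<Sum>k<3. smul (dreal (d k)) (m k)) \<in> epsM smul \<and>
        (\<forall>i<3. lift smul B (m i) =
                 lift smul A (m i) +
                 smul eps (\<Sum>j<3. \<Sum>k<3. smul (dreal (levi i j k * d k)) (lift smul A (m j)))))"

definition lineE ::
  "(dual \<Rightarrow> 'm::ab_group_add \<Rightarrow> 'm) \<Rightarrow> ('m \<Rightarrow> 'm \<Rightarrow> dual) \<Rightarrow> (nat \<Rightarrow> 'm) set
     \<Rightarrow> 'm set \<Rightarrow> 'm \<Rightarrow> 'm set set" where
  "lineE smul sp OR A w =
     {B \<in> Espace smul sp. \<exists>t::real. diffE smul sp OR B A (smul (dreal t) w)}"

definition unit_part ::
  "(dual \<Rightarrow> 'm::ab_group_add \<Rightarrow> 'm) \<Rightarrow> ('m \<Rightarrow> 'm \<Rightarrow> dual) \<Rightarrow> 'm \<Rightarrow> 'm" where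
  "unit_part smul sp z =
     (THE u. sp u u = 1 \<and> (\<exists>a b. a > 0 \<and> z = smul (Dual a b) u))"

definition axis ::
  "(dual \<Rightarrow> 'm::ab_group_add \<Rightarrow> 'm) \<Rightarrow> ('m \<Rightarrow> 'm \<Rightarrow> dual) \<Rightarrow> 'm \<Rightarrow> 'm set set" where
  "axis smul sp z = {P \<in> Espace smul sp. unit_part smul sp z \<in> P}"

text \<open>Euclidean inner product on V = M / eps M: Re(x \<circ> y) on representatives.\<close>
definition orthV :: "('m \<Rightarrow> 'm \<Rightarrow> dual) \<Rightarrow> 'm \<Rightarrow> 'm \<Rightarrow> bool" where
  "orthV sp v w \<longleftrightarrow> re (sp v w) = 0"

definition dindep2 :: "(dual \<Rightarrow> 'm::ab_group_add \<Rightarrow> 'm) \<Rightarrow> 'm \<Rightarrow> 'm \<Rightarrow> bool" where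
  "dindep2 smul x y \<longleftrightarrow> (\<forall>a b. smul a x + smul b y = 0 \<longrightarrow> a = 0 \<and> b = 0)"

definition dcomb :: "(dual \<Rightarrow> 'm::ab_group_add \<Rightarrow> 'm) \<Rightarrow> 'm \<Rightarrow> 'm \<Rightarrow> 'm \<Rightarrow> bool" where
  "dcomb smul x y z \<longleftrightarrow> (\<exists>a b. x = smul a y + smul b z)"

definition axes_meet_common_perp ::
  "(dual \<Rightarrow> 'm::ab_group_add \<Rightarrow> 'm) \<Rightarrow> ('m \<Rightarrow> 'm \<Rightarrow> dual) \<Rightarrow> (nat \<Rightarrow> 'm) set
     \<Rightarrow> 'm \<Rightarrow> 'm \<Rightarrow> 'm \<Rightarrow> bool" where
  "axes_meet_common_perp smul sp OR z1 z2 z3 \<longleftrightarrow>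
     (\<exists>A \<in> Espace smul sp. \<exists>w. w \<notin> epsM smul \<and>
        (\<forall>z \<in> {z1, z2, z3}.
           axis smul sp z \<inter> lineE smul sp OR A w \<noteq> {} \<and>
           orthV sp (unit_part smul sp z) w))"

end

theory Submission
  imports Defs "HOL-Analysis.Linear_Algebra"
begin

(*
  Everything is computed in coordinates with respect to a positive orthonormal frame, which
  exists by Gram-Schmidt.  In these coordinates a point of E is a point c of R^3: the subspace
  E_point c consists of the dual vectors whose dual part is the cross product of c with their
  real part, i.e. whose lines pass through c.

  (i) <-> (ii): by Lagrange's identity the Gram determinant of two independent vectors has
  positive real part, so when the triple product vanishes Cramer's rule expresses the third
  vector through the other two.

  (iii) -> (i): the axis of a unit vector u meets the line through a with direction r at a right
  angle exactly when u is dual-orthogonal to the dual vector of that line, and three vectors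
  dual-orthogonal to a vector outside eps M have vanishing triple product.

  (i) -> (iii): all three vectors are dual-orthogonal to n = z1 x z2, and a unit vector
  dual-orthogonal to n meets the axis of n at a right angle; that axis is the common line.
*)

section \<open>Dual numbers\<close>

lemma dual_eq_iff: "x = y \<longleftrightarrow> re x = re y \<and> du x = du y"
  by (cases x; cases y) auto

lemma re_du_simps [simp]:
  "re (x + y) = re x + re y" "du (x + y) = du x + du y"
  "re (x - y) = re x - re y" "du (x - y) = du x - du y"
  "re (- x) = - re x" "du (- x) = - du x"
  "re (x * y) = re x * re y" "du (x * y) = re x * du y + du x * re y"
  "re 0 = 0" "du 0 = 0" "re 1 = 1" "du 1 = 0"
  "re eps = 0" "du eps = 1" "re (dreal r) = r" "du (dreal r) = 0"
  by (simp_all add: plus_dual_def minus_dual_def uminus_dual_def times_dual_def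
      zero_dual_def one_dual_def eps_def dreal_def)

lemma dreal_simps [simp]: "dreal 0 = 0" "dreal 1 = 1" "dreal (- r) = - dreal r"
  by (simp_all add: dual_eq_iff)

lemma re_sum [simp]: "re (sum f A) = (\<Sum>a\<in>A. re (f a))"
  and du_sum [simp]: "du (sum f A) = (\<Sum>a\<in>A. du (f a))"
  by (induction A rule: infinite_finite_induct) auto

lemma eps_squared: "eps * eps = 0"
  by (simp add: dual_eq_iff)

lemma eps_mult_eq_0_iff: "eps * x = 0 \<longleftrightarrow> re x = 0"
  by (simp add: dual_eq_iff)

definition dual_inverse :: "dual \<Rightarrow> dual" where
  "dual_inverse x = Dual (1 / re x) (- du x / (re x)\<^sup>2)"

lemma re_dual_inverse [simp]: "re (dual_inverse x) = 1 / re x"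
  by (simp add: dual_inverse_def)

lemma dual_inverse_left: "re x \<noteq> 0 \<Longrightarrow> dual_inverse x * x = 1"
  by (simp add: dual_eq_iff dual_inverse_def power2_eq_square field_simps)

lemma dual_mult_eq_0_iff_right: "re x \<noteq> 0 \<Longrightarrow> x * y = 0 \<longleftrightarrow> y = 0"
  by (metis dual_inverse_left mult.assoc mult_1 mult_zero_right)

definition dual_sqrt :: "dual \<Rightarrow> dual" where
  "dual_sqrt s = Dual (sqrt (re s)) (du s / (2 * sqrt (re s)))"

lemma re_dual_sqrt [simp]: "re (dual_sqrt s) = sqrt (re s)"
  by (simp add: dual_sqrt_def)

lemma dual_sqrt_square: "re s > 0 \<Longrightarrow> dual_sqrt s * dual_sqrt s = s"
  by (simp add: dual_eq_iff dual_sqrt_def field_simps)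

section \<open>Coordinate triples\<close>

lemma sum3: "(\<Sum>i<3. f i) = f 0 + f 1 + f (2::nat)"
  by (simp add: numeral_3_eq_3 numeral_2_eq_2 add.commute add.left_commute)

lemma all3: "(\<forall>i<3. P i) \<longleftrightarrow> P 0 \<and> P 1 \<and> P (2::nat)"
  by (auto simp: numeral_3_eq_3 numeral_2_eq_2 less_Suc_eq)

lemma less3_cases: "i < 3 \<Longrightarrow> (i = 0 \<Longrightarrow> P) \<Longrightarrow> (i = 1 \<Longrightarrow> P) \<Longrightarrow> (i = 2 \<Longrightarrow> P) \<Longrightarrow> P"
  for i :: nat by linarith

definition vdot :: "(nat \<Rightarrow> 'a::comm_ring) \<Rightarrow> (nat \<Rightarrow> 'a) \<Rightarrow> 'a" where
  "vdot a b = a 0 * b 0 + a 1 * b 1 + a 2 * b 2"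

definition vcross :: "(nat \<Rightarrow> 'a::comm_ring) \<Rightarrow> (nat \<Rightarrow> 'a) \<Rightarrow> nat \<Rightarrow> 'a" where
  "vcross a b k =
     (if k = 0 then a 1 * b 2 - a 2 * b 1
      else if k = 1 then a 2 * b 0 - a 0 * b 2
      else a 0 * b 1 - a 1 * b 0)"

lemma vdot_commute: "vdot a b = vdot b a"
  by (simp add: vdot_def mult.commute)

lemma vdot_vcross_cyclic: "vdot (vcross a b) c = vdot (vcross b c) a"
  by (simp add: vdot_def vcross_def algebra_simps)

lemma vdot_vcross_self: "vdot (vcross a b) a = 0" "vdot (vcross a b) b = 0"
  by (simp_all add: vdot_def vcross_def algebra_simps)

lemma vcross_cong: "(\<And>k. k < 3 \<Longrightarrow> a k = a' k) \<Longrightarrow> vcross a b = vcross a' b"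
  by (simp add: vcross_def fun_eq_iff)

lemma vcross_vcross: "k < 3 \<Longrightarrow> vcross (vcross a b) c k = vdot a c * b k - vdot b c * a k"
  by (erule less3_cases) (simp_all add: vdot_def vcross_def algebra_simps)

lemma lagrange_identity:
  "vdot a a * vdot b b - vdot a b * vdot a b = vdot (vcross a b) (vcross a b)"
  by (simp add: vdot_def vcross_def algebra_simps)

lemma gram_expansion:
  "k < 3 \<Longrightarrow> (vdot a a * vdot b b - vdot a b * vdot a b) * c k =
     (vdot c a * vdot b b - vdot c b * vdot a b) * a k
     + (vdot c b * vdot a a - vdot c a * vdot a b) * b k
     + vdot (vcross a b) c * vcross a b k"
  by (erule less3_cases) (simp_all add: vdot_def vcross_def algebra_simps)

lemma triple_product_expansion:
  "k < 3 \<Longrightarrow> vdot (vcross a b) c * e k =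
     vdot a e * vcross b c k + vdot b e * vcross c a k + vdot c e * vcross a b k"
  by (erule less3_cases) (simp_all add: vdot_def vcross_def algebra_simps)

lemma moment_identity:
  fixes p q r s :: "nat \<Rightarrow> real"
  assumes "l < 3" and "vdot p p = 1" "vdot q p = 0" "vdot r p = 0" "vdot s p = - vdot q r"
  shows "vdot r r * q l = vcross (vcross r s) p l + vdot (vcross p q) r * vcross r p l"
proof -
  have "vcross (vcross r s) p l + vdot (vcross p q) r * vcross r p l - vdot r r * vdot p p * q l
      = s l * vdot r p - r l * vdot s p - vdot q r * vdot p p * r l - vdot r p * vdot r p * q l
        - vdot q p * vcross (vcross r p) r l + vdot q r * vdot r p * p l"
    using \<open>l < 3\<close> by (elim less3_cases) (simp_all add: vdot_def vcross_def algebra_simps)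
  with assms(2-) show ?thesis
    by simp
qed

lemma re_vdot: "re (vdot a b) = vdot (\<lambda>k. re (a k)) (\<lambda>k. re (b k))"
  and du_vdot: "du (vdot a b) =
     vdot (\<lambda>k. re (a k)) (\<lambda>k. du (b k)) + vdot (\<lambda>k. du (a k)) (\<lambda>k. re (b k))"
  by (simp_all add: vdot_def algebra_simps)

lemma re_vcross: "re (vcross a b k) = vcross (\<lambda>k. re (a k)) (\<lambda>k. re (b k)) k"
  by (simp add: vcross_def)

lemma vdot_self_pos:
  fixes p :: "nat \<Rightarrow> real"
  assumes "\<exists>k<3. p k \<noteq> 0"
  shows "vdot p p > 0"
proof -
  obtain k where "k < 3" "p k \<noteq> 0"
    using assms by blast
  then have "0 < (\<Sum>i<3. (p i)\<^sup>2)"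
    by (intro sum_pos2[of _ k]) auto
  then show ?thesis
    by (simp add: vdot_def sum3 power2_eq_square)
qed

lemma real3_inj_imp_surj:
  fixes R :: "nat \<Rightarrow> nat \<Rightarrow> real"
  assumes inj: "\<And>c. \<forall>k<3. (\<Sum>i<3. c i * R i k) = 0 \<Longrightarrow> \<forall>i<3. c i = 0"
  shows "\<exists>c. \<forall>k<3. (\<Sum>i<3. c i * R i k) = t k"
proof -
  define f :: "real \<times> real \<times> real \<Rightarrow> real \<times> real \<times> real" where
    "f v = (case v of (x, y, z) \<Rightarrow> (x * R 0 0 + y * R 1 0 + z * R 2 0,
       x * R 0 1 + y * R 1 1 + z * R 2 1, x * R 0 2 + y * R 1 2 + z * R 2 2))" for v
  define vec :: "real \<times> real \<times> real \<Rightarrow> nat \<Rightarrow> real" where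
    "vec v i = (if i = 0 then fst v else if i = 1 then fst (snd v) else snd (snd v))" for v i
  have f_vec: "f v = (\<Sum>i<3. vec v i * R i 0, \<Sum>i<3. vec v i * R i 1, \<Sum>i<3. vec v i * R i 2)"
    for v by (cases v) (simp add: f_def vec_def sum3)
  have "linear f"
  proof (rule linearI)
    show "f (v + w) = f v + f w" for v w
      by (cases v; cases w) (simp add: f_def algebra_simps)
    show "f (r *\<^sub>R v) = r *\<^sub>R f v" for r v
      by (cases v) (simp add: f_def algebra_simps)
  qed
  moreover have "inj f"
    unfolding linear_injective_0[OF \<open>linear f\<close>]
  proof (intro allI impI)
    fix v assume "f v = 0"
    then have "\<forall>k<3. (\<Sum>i<3. vec v i * R i k) = 0"
      unfolding f_vec all3 zero_prod_def by simp
    then have "\<forall>i<3. vec v i = 0"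
      by (rule inj)
    then show "v = 0"
      by (cases v) (simp add: all3 vec_def zero_prod_def)
  qed
  ultimately obtain v where "f v = (t 0, t 1, t 2)"
    by (metis linear_injective_imp_surjective surjD)
  then show ?thesis
    by (intro exI[of _ "vec v"]) (simp add: f_vec all3)
qed

section \<open>Modules over the dual numbers with a scalar product\<close>

lemma dindep2_commute: "dindep2 smul x y \<Longrightarrow> dindep2 smul y x"
  unfolding dindep2_def by (metis add.commute)

locale dual_euclidean_module = module smul
  for smul :: "dual \<Rightarrow> 'm::ab_group_add \<Rightarrow> 'm" +
  fixes sp :: "'m \<Rightarrow> 'm \<Rightarrow> dual" and OR :: "(nat \<Rightarrow> 'm) set"
  assumes scalar_product: "scalar_product smul sp"
    and oriented: "orientation smul OR"
begin

lemma sp_commute: "sp x y = sp y x"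
  and sp_add_left: "sp (x + y) z = sp x z + sp y z"
  and sp_scale_left: "sp (smul a x) y = a * sp x y"
  and re_sp_self_eq_0_iff: "re (sp x x) = 0 \<longleftrightarrow> x \<in> epsM smul"
  using scalar_product unfolding scalar_product_def by blast+

lemma re_sp_self_pos: "x \<notin> epsM smul \<Longrightarrow> re (sp x x) > 0"
  using scalar_product re_sp_self_eq_0_iff unfolding scalar_product_def
  by (metis order_le_less)

lemma sp_add_right: "sp z (x + y) = sp z x + sp z y"
  and sp_scale_right: "sp y (smul a x) = a * sp y x"
  by (metis sp_commute sp_add_left, metis sp_commute sp_scale_left)

lemma sp_minus_left: "sp (- x) y = - sp x y"
  and sp_minus_right: "sp y (- x) = - sp y x"
  using sp_scale_left[of "-1" x y] sp_scale_right[of y "-1" x] by simp_all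

lemma sp_diff_left: "sp (x - z) y = sp x y - sp z y"
  and sp_diff_right: "sp y (x - z) = sp y x - sp y z"
  using sp_add_left[of x "- z" y] sp_add_right[of y x "- z"]
  by (simp_all add: sp_minus_left sp_minus_right)

lemma sp_zero_left [simp]: "sp 0 y = 0"
  and sp_zero_right [simp]: "sp y 0 = 0"
  using sp_diff_left[of 0 0 y] sp_diff_right[of y 0 0] by simp_all

lemma sp_sum_left: "sp (sum f A) y = (\<Sum>a\<in>A. sp (f a) y)"
  and sp_sum_right: "sp y (sum f A) = (\<Sum>a\<in>A. sp y (f a))"
  by (induction A rule: infinite_finite_induct) (simp_all add: sp_add_left sp_add_right)

lemmas sp_linear = sp_add_left sp_add_right sp_scale_left sp_scale_right
  sp_minus_left sp_minus_right sp_diff_left sp_diff_right sp_sum_left sp_sum_right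

lemma epsM_iff: "x \<in> epsM smul \<longleftrightarrow> (\<exists>y. x = smul eps y)"
  by (auto simp: epsM_def)

lemma sp_nondegenerate:
  assumes "\<And>y. sp x y = 0"
  shows "x = 0"
proof -
  have "x \<in> epsM smul"
    using assms[of x] by (simp flip: re_sp_self_eq_0_iff)
  then obtain y where y: "x = smul eps y"
    by (auto simp: epsM_iff)
  show ?thesis
  proof (cases "y \<in> epsM smul")
    case True
    then show ?thesis
      using y by (auto simp: epsM_iff eps_squared)
  next
    case False
    have "eps * sp y y = 0"
      using assms[of y] y by (simp add: sp_scale_left)
    then show ?thesis
      using re_sp_self_pos[OF False] by (simp add: eps_mult_eq_0_iff)
  qed
qed

lemma dindep2_not_epsM:
  assumes "dindep2 smul x y"
  shows "x \<notin> epsM smul"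
proof
  assume "x \<in> epsM smul"
  then obtain x' where "x = smul eps x'"
    by (auto simp: epsM_iff)
  then have "smul eps x + smul 0 y = 0"
    by (simp add: eps_squared)
  then have "eps = 0"
    using assms unfolding dindep2_def by blast
  then show False
    by (simp add: dual_eq_iff)
qed

lemma unit_positive_multiple_eq:
  assumes u: "sp u u = 1" and v: "sp v v = 1" and pos: "re \<mu> > 0" and uv: "u = smul \<mu> v"
  shows "\<mu> = 1"
proof -
  have "\<mu> * \<mu> = 1"
    using u v by (simp add: uv sp_scale_left sp_scale_right)
  then have "re \<mu> * re \<mu> = 1" "re \<mu> * du \<mu> = 0"
    by (auto simp: dual_eq_iff algebra_simps)
  moreover have "(re \<mu> - 1) * (re \<mu> + 1) = re \<mu> * re \<mu> - 1"
    by (simp add: algebra_simps)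
  ultimately have "re \<mu> = 1"
    using pos by simp
  with \<open>re \<mu> * du \<mu> = 0\<close> show ?thesis
    by (simp add: dual_eq_iff)
qed

lemma unit_partE:
  assumes z: "z \<notin> epsM smul"
  obtains \<rho> where "re \<rho> > 0" "z = smul \<rho> (unit_part smul sp z)"
    "unit_part smul sp z = smul (dual_inverse \<rho>) z"
    "sp (unit_part smul sp z) (unit_part smul sp z) = 1"
proof -
  define \<rho> where "\<rho> = dual_sqrt (sp z z)"
  define u where "u = smul (dual_inverse \<rho>) z"
  have pos: "re \<rho> > 0"
    using re_sp_self_pos[OF z] by (simp add: \<rho>_def)
  have inv: "dual_inverse \<rho> * \<rho> = 1"
    using pos by (simp add: dual_inverse_left)
  have z_u: "z = smul \<rho> u"
    using inv by (simp add: u_def mult.commute)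
  have square: "sp z z = \<rho> * \<rho>"
    using dual_sqrt_square[OF re_sp_self_pos[OF z]] by (simp add: \<rho>_def)
  have u_u: "sp u u = 1"
  proof -
    have "sp u u = (dual_inverse \<rho> * \<rho>) * (dual_inverse \<rho> * \<rho>)"
      by (simp add: u_def square sp_scale_left sp_scale_right ac_simps)
    then show ?thesis
      by (simp add: inv)
  qed
  have unit_part_eq: "unit_part smul sp z = u"
    unfolding unit_part_def
  proof (rule the_equality)
    show "sp u u = 1 \<and> (\<exists>a b. a > 0 \<and> z = smul (Dual a b) u)"
      using u_u z_u pos dual.collapse[of \<rho>] by metis
  next
    fix v assume "sp v v = 1 \<and> (\<exists>a b. a > 0 \<and> z = smul (Dual a b) v)"
    then obtain a b where v: "sp v v = 1" "a > 0" "z = smul (Dual a b) v"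
      by blast
    have "u = smul (dual_inverse \<rho> * Dual a b) v"
      unfolding u_def v(3) by simp
    moreover have "re (dual_inverse \<rho> * Dual a b) > 0"
      using pos v(2) by simp
    ultimately have "dual_inverse \<rho> * Dual a b = 1"
      using unit_positive_multiple_eq[OF u_u v(1)] by blast
    with \<open>u = smul (dual_inverse \<rho> * Dual a b) v\<close> show "v = u"
      by simp
  qed
  show ?thesis
    using pos z_u u_def u_u unfolding unit_part_eq[symmetric] by (rule that)
qed

lemma sp_unit_part_eq_0_iff:
  assumes "z \<notin> epsM smul"
  shows "sp (unit_part smul sp z) y = 0 \<longleftrightarrow> sp z y = 0"
proof -
  obtain \<rho> where pos: "re \<rho> > 0" and z: "z = smul \<rho> (unit_part smul sp z)"
    using unit_partE[OF assms] by blast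
  have "sp z y = sp (smul \<rho> (unit_part smul sp z)) y"
    by (simp only: z[symmetric])
  also have "\<dots> = \<rho> * sp (unit_part smul sp z) y"
    by (rule sp_scale_left)
  finally show ?thesis
    using dual_mult_eq_0_iff_right[of \<rho>] pos by simp
qed

section \<open>Positive orthonormal frames\<close>

definition comb3 :: "(nat \<Rightarrow> 'm) \<Rightarrow> (nat \<Rightarrow> dual) \<Rightarrow> 'm" where
  "comb3 b c = (\<Sum>i<3. smul (c i) (b i))"

lemma comb3_diff: "comb3 b c - comb3 b d = comb3 b (\<lambda>i. c i - d i)"
  by (simp add: comb3_def sum_subtractf scale_left_diff_distrib)

lemma scale_comb3: "smul a (comb3 b c) = comb3 b (\<lambda>i. a * c i)"
  by (simp add: comb3_def scale_sum_right)

lemma comb3_unit: "i < 3 \<Longrightarrow> b i = comb3 b (\<lambda>j. if j = i then 1 else 0)"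
  by (erule less3_cases) (simp_all add: comb3_def sum3)

lemma dbasis_span: "is_dbasis smul b \<Longrightarrow> \<exists>c. x = comb3 b c"
  by (simp add: is_dbasis_def comb3_def)

lemma dbasis_unique:
  assumes "is_dbasis smul b" "comb3 b c = comb3 b d" "i < 3"
  shows "c i = d i"
  using assms comb3_diff[of b c d] unfolding is_dbasis_def comb3_def by fastforce

lemma comb3_not_epsM:
  assumes b: "is_dbasis smul b" and i: "i < 3" and c: "re (c i) \<noteq> 0"
  shows "comb3 b c \<notin> epsM smul"
proof
  assume "comb3 b c \<in> epsM smul"
  then obtain y where "comb3 b c = smul eps y"
    by (auto simp: epsM_iff)
  moreover obtain d where "y = comb3 b d"
    using dbasis_span[OF b] by blast
  ultimately have "c i = eps * d i"
    using dbasis_unique[OF b _ i] by (simp add: scale_comb3)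
  with c show False
    by simp
qed

lemma sp_comb3_orthonormal: "orthonormal sp g \<Longrightarrow> j < 3 \<Longrightarrow> sp (comb3 g c) (g j) = c j"
  unfolding orthonormal_def all3
  by (erule less3_cases) (simp_all add: comb3_def sum3 sp_linear)

lemma orthonormal_dbasis:
  assumes b: "is_dbasis smul b" and g: "orthonormal sp g"
    and b_g: "\<And>i. i < 3 \<Longrightarrow> \<exists>c. b i = comb3 g c"
  shows "is_dbasis smul g"
proof -
  have span: "x = comb3 g (\<lambda>i. sp x (g i))" for x
  proof -
    define x' where "x' = x - comb3 g (\<lambda>i. sp x (g i))"
    have "sp x' (g j) = 0" if "j < 3" for j
      using sp_comb3_orthonormal[OF g that] by (simp add: x'_def sp_diff_left)
    then have "sp x' (b i) = 0" if "i < 3" for i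
      using b_g[OF that] by (auto simp: comb3_def sp_sum_right sp_scale_right intro!: sum.neutral)
    then have "sp x' y = 0" for y
      using dbasis_span[OF b, of y] by (auto simp: comb3_def sp_sum_right sp_scale_right intro!: sum.neutral)
    then have "x' = 0"
      by (rule sp_nondegenerate)
    then show ?thesis
      by (simp add: x'_def)
  qed
  have indep: "c i = 0" if "comb3 g c = 0" "i < 3" for c i
    using sp_comb3_orthonormal[OF g that(2), of c] that(1) by simp
  show ?thesis
    unfolding is_dbasis_def
  proof (intro conjI allI impI)
    show "\<exists>c. x = (\<Sum>i<3. smul (c i) (g i))" for x
      using span[of x] unfolding comb3_def by (rule exI[of _ "\<lambda>i. sp x (g i)"])
    show "c i = 0" if "(\<Sum>i<3. smul (c i) (g i)) = 0" "i < 3" for c i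
      using indep that unfolding comb3_def by blast
  qed
qed

lemma triangular_same_orient:
  assumes g: "\<And>j. j < 3 \<Longrightarrow> g j = comb3 b (A j)"
    and triangular: "A 0 1 = 0" "A 0 2 = 0" "A 1 2 = 0"
    and diagonal: "\<And>j. j < 3 \<Longrightarrow> re (A j j) > 0"
  shows "same_orient smul g b"
  unfolding same_orient_def
proof (intro exI conjI)
  show "\<forall>j<3. g j = (\<Sum>k<3. smul (A j k) (b k))"
    using g by (simp add: comb3_def)
  have "re (A 0 0) * re (A 1 1) * re (A 2 2) > 0"
    using diagonal[of 0] diagonal[of 1] diagonal[of 2] by simp
  then show "det3 (\<lambda>j k. re (A j k)) > 0"
    using triangular by (simp add: det3_def)
qed

lemma gram_schmidt:
  assumes b: "is_dbasis smul b"
  obtains g A where "orthonormal sp g" "\<And>i. i < 3 \<Longrightarrow> \<exists>c. b i = comb3 g c"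
    "\<And>j. j < 3 \<Longrightarrow> g j = comb3 b (A j)" "A 0 1 = 0" "A 0 2 = 0" "A 1 2 = 0"
    "\<And>j. j < 3 \<Longrightarrow> re (A j j) > 0"
proof -
  define e :: "nat \<Rightarrow> nat \<Rightarrow> dual" where "e i = (\<lambda>j. if j = i then 1 else 0)" for i
  have b_e: "b i = comb3 b (e i)" if "i < 3" for i
    using comb3_unit[OF that] by (simp add: e_def)
  define g0 where "g0 = unit_part smul sp (b 0)"
  have b0: "b 0 \<notin> epsM smul"
    using comb3_not_epsM[OF b, of 0 "e 0"] b_e[of 0] by (simp add: e_def)
  obtain \<rho>0 where \<rho>0: "re \<rho>0 > 0" "b 0 = smul \<rho>0 g0"
    "g0 = smul (dual_inverse \<rho>0) (b 0)" "sp g0 g0 = 1"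
    by (rule unit_partE[OF b0, folded g0_def])
  define C1 where "C1 k = e 1 k - sp g0 (b 1) * dual_inverse \<rho>0 * e 0 k" for k
  define y1 where "y1 = b 1 - smul (sp g0 (b 1)) g0"
  define g1 where "g1 = unit_part smul sp y1"
  have y1: "y1 = comb3 b C1"
    unfolding y1_def C1_def \<rho>0(3) using b_e[of 1] b_e[of 0]
    by (simp add: scale_comb3 comb3_diff mult.assoc)
  then have y1_not_epsM: "y1 \<notin> epsM smul"
    using comb3_not_epsM[OF b, of 1 C1] by (simp add: C1_def e_def)
  obtain \<rho>1 where \<rho>1: "re \<rho>1 > 0" "y1 = smul \<rho>1 g1"
    "g1 = smul (dual_inverse \<rho>1) y1" "sp g1 g1 = 1"
    by (rule unit_partE[OF y1_not_epsM, folded g1_def])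
  define C2 where "C2 k = e 2 k - sp g0 (b 2) * dual_inverse \<rho>0 * e 0 k
    - sp g1 (b 2) * dual_inverse \<rho>1 * C1 k" for k
  define y2 where "y2 = b 2 - smul (sp g0 (b 2)) g0 - smul (sp g1 (b 2)) g1"
  define g2 where "g2 = unit_part smul sp y2"
  have y2: "y2 = comb3 b C2"
    unfolding y2_def C2_def \<rho>0(3) \<rho>1(3) y1 using b_e[of 2] b_e[of 0]
    by (simp add: scale_comb3 comb3_diff mult.assoc)
  then have y2_not_epsM: "y2 \<notin> epsM smul"
    using comb3_not_epsM[OF b, of 2 C2] by (simp add: C2_def C1_def e_def)
  obtain \<rho>2 where \<rho>2: "re \<rho>2 > 0" "y2 = smul \<rho>2 g2"
    "g2 = smul (dual_inverse \<rho>2) y2" "sp g2 g2 = 1"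
    by (rule unit_partE[OF y2_not_epsM, folded g2_def])
  have g01: "sp g0 g1 = 0"
    unfolding \<rho>1(3) y1_def by (simp add: sp_linear \<rho>0(4))
  have g02: "sp g0 g2 = 0"
    unfolding \<rho>2(3) y2_def by (simp add: sp_linear \<rho>0(4) g01)
  have g12: "sp g1 g2 = 0"
    unfolding \<rho>2(3) y2_def by (simp add: sp_linear \<rho>1(4) g01 sp_commute[of g1 g0])
  define g where "g i = (if i = 0 then g0 else if i = 1 then g1 else g2)" for i :: nat
  define A where "A j = (if j = 0 then (\<lambda>k. dual_inverse \<rho>0 * e 0 k)
    else if j = 1 then (\<lambda>k. dual_inverse \<rho>1 * C1 k) else (\<lambda>k. dual_inverse \<rho>2 * C2 k))"
    for j :: nat
  show ?thesis
  proof (rule that[of g A])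
    show "orthonormal sp g"
      unfolding orthonormal_def all3 g_def
      using \<rho>0(4) \<rho>1(4) \<rho>2(4) g01 g02 g12 by (simp add: sp_commute[of g1 g0]
        sp_commute[of g2 g0] sp_commute[of g2 g1])
    show "\<exists>c. b i = comb3 g c" if "i < 3" for i
      using that
    proof (rule less3_cases)
      show "\<exists>c. b i = comb3 g c" if "i = 0"
        using \<rho>0(2) that by (intro exI[of _ "\<lambda>k. \<rho>0 * e 0 k"]) (simp add: comb3_def sum3 g_def e_def)
      show "\<exists>c. b i = comb3 g c" if "i = 1"
        using \<rho>1(2) that unfolding y1_def
        by (intro exI[of _ "\<lambda>k. if k = 0 then sp g0 (b 1) else if k = 1 then \<rho>1 else 0"])
          (simp add: comb3_def sum3 g_def algebra_simps)
      show "\<exists>c. b i = comb3 g c" if "i = 2"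
        using \<rho>2(2) that unfolding y2_def
        by (intro exI[of _ "\<lambda>k. if k = 0 then sp g0 (b 2) else if k = 1 then sp g1 (b 2) else \<rho>2"])
          (simp add: comb3_def sum3 g_def algebra_simps)
    qed
    show "g j = comb3 b (A j)" if "j < 3" for j
      using that \<rho>0(3) \<rho>1(3) \<rho>2(3) y1 y2 b_e[of 0]
      by (elim less3_cases) (simp_all add: g_def A_def scale_comb3)
    show "A 0 1 = 0" "A 0 2 = 0" "A 1 2 = 0"
      by (simp_all add: A_def C1_def e_def)
    show "re (A j j) > 0" if "j < 3" for j
      using that \<rho>0(1) \<rho>1(1) \<rho>2(1)
      by (elim less3_cases) (simp_all add: A_def C1_def C2_def e_def)
  qed
qed

lemma pos_orthonormal_exists: "\<exists>m. pos_orthonormal smul sp OR m"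
proof -
  obtain b where b: "is_dbasis smul b"
    and OR: "OR = {b'. is_dbasis smul b' \<and> same_orient smul b' b}"
    using oriented unfolding orientation_def by blast
  obtain g A where "orthonormal sp g" "\<And>i. i < 3 \<Longrightarrow> \<exists>c. b i = comb3 g c"
    "\<And>j. j < 3 \<Longrightarrow> g j = comb3 b (A j)" "A 0 1 = 0" "A 0 2 = 0" "A 1 2 = 0"
    "\<And>j. j < 3 \<Longrightarrow> re (A j j) > 0"
    using gram_schmidt[OF b] by metis
  then have "pos_orthonormal smul sp OR g"
    unfolding pos_orthonormal_def OR
    using orthonormal_dbasis[OF b] triangular_same_orient by blast
  then show ?thesis
    by blast
qed

definition frame :: "nat \<Rightarrow> 'm" where
  "frame = pob smul sp OR"

lemma frame_pos_orthonormal: "pos_orthonormal smul sp OR frame"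
  unfolding frame_def pob_def using pos_orthonormal_exists by (rule someI_ex)

lemma frame_dbasis: "is_dbasis smul frame"
  and frame_orthonormal: "orthonormal sp frame"
  using frame_pos_orthonormal by (simp_all add: pos_orthonormal_def)

definition coord :: "'m \<Rightarrow> nat \<Rightarrow> dual" where
  "coord x i = sp x (frame i)"

definition coord_re :: "'m \<Rightarrow> nat \<Rightarrow> real" where
  "coord_re x = (\<lambda>i. re (coord x i))"

definition coord_du :: "'m \<Rightarrow> nat \<Rightarrow> real" where
  "coord_du x = (\<lambda>i. du (coord x i))"

lemma coord_add [simp]: "coord (x + y) i = coord x i + coord y i"
  and coord_diff [simp]: "coord (x - y) i = coord x i - coord y i"
  and coord_scale [simp]: "coord (smul a x) i = a * coord x i"
  and coord_zero [simp]: "coord 0 i = 0"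
  and coord_sum [simp]: "coord (sum f A) i = (\<Sum>a\<in>A. coord (f a) i)"
  by (simp_all add: coord_def sp_linear)

lemma sp_frame_left: "sp (frame i) y = coord y i"
  by (simp add: coord_def sp_commute)

lemma coord_comb3: "j < 3 \<Longrightarrow> coord (comb3 frame c) j = c j"
  using sp_comb3_orthonormal[OF frame_orthonormal] by (simp add: coord_def)

lemma coord_frame: "i < 3 \<Longrightarrow> j < 3 \<Longrightarrow> coord (frame i) j = (if i = j then 1 else 0)"
  using frame_orthonormal by (simp add: coord_def orthonormal_def)

lemma comb3_coord: "comb3 frame (coord x) = x"
proof -
  obtain c where c: "x = comb3 frame c"
    using dbasis_span[OF frame_dbasis] by blast
  then have "coord x j = c j" if "j < 3" for j
    using coord_comb3[OF that] by simp
  then have "comb3 frame (coord x) = comb3 frame c"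
    unfolding comb3_def by (intro sum.cong) auto
  with c show ?thesis
    by simp
qed

lemma coord_eqI:
  assumes "\<And>i. i < 3 \<Longrightarrow> coord x i = coord y i"
  shows "x = y"
proof -
  have "comb3 frame (coord x) = comb3 frame (coord y)"
    unfolding comb3_def using assms by (intro sum.cong) auto
  then show ?thesis
    by (simp only: comb3_coord)
qed

lemma eq_iff_coord: "x = y \<longleftrightarrow> (\<forall>i<3. coord x i = coord y i)"
  using coord_eqI by auto

lemma sp_eq_vdot: "sp x y = vdot (coord x) (coord y)"
proof -
  have "sp x y = sp (comb3 frame (coord x)) y"
    by (simp only: comb3_coord)
  also have "\<dots> = (\<Sum>i<3. coord x i * coord y i)"
    by (simp add: comb3_def sp_sum_left sp_scale_left sp_frame_left)
  finally show ?thesis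
    by (simp add: vdot_def sum3)
qed

lemma re_sp: "re (sp x y) = vdot (coord_re x) (coord_re y)"
  and du_sp: "du (sp x y) = vdot (coord_re x) (coord_du y) + vdot (coord_du x) (coord_re y)"
  by (simp_all add: sp_eq_vdot re_vdot du_vdot coord_re_def coord_du_def)

lemma epsM_iff_coord_re: "x \<in> epsM smul \<longleftrightarrow> (\<forall>k<3. coord_re x k = 0)"
proof
  show "x \<in> epsM smul \<Longrightarrow> \<forall>k<3. coord_re x k = 0"
    by (auto simp: epsM_iff coord_re_def)
next
  assume re0: "\<forall>k<3. coord_re x k = 0"
  have "x = smul eps (comb3 frame (\<lambda>k. dreal (coord_du x k)))"
    using re0 by (intro coord_eqI) (simp add: coord_comb3 dual_eq_iff coord_re_def coord_du_def)
  then show "x \<in> epsM smul"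
    by (auto simp: epsM_iff)
qed

lemma coord_cross: "k < 3 \<Longrightarrow> coord (cross smul sp OR x y) k = vcross (coord x) (coord y) k"
proof -
  assume k: "k < 3"
  have "cross smul sp OR x y =
      comb3 frame (\<lambda>k. \<Sum>i<3. \<Sum>j<3. coord x i * coord y j * dreal (levi i j k))"
    by (simp add: cross_def frame_def[symmetric] comb3_def coord_def Let_def)
  moreover have "(\<Sum>i<3. \<Sum>j<3. coord x i * coord y j * dreal (levi i j k)) =
      vcross (coord x) (coord y) k"
    using k by (elim less3_cases) (simp_all add: sum3 levi_def vcross_def)
  ultimately show ?thesis
    using k by (simp add: coord_comb3)
qed

lemma sp_cross: "sp (cross smul sp OR x y) z = vdot (vcross (coord x) (coord y)) (coord z)"
  by (simp add: sp_eq_vdot vdot_def coord_cross)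

section \<open>Vanishing triple product and linear dependence\<close>

lemma cross_not_epsM:
  assumes xy: "dindep2 smul x y"
  shows "cross smul sp OR x y \<notin> epsM smul"
proof
  assume "cross smul sp OR x y \<in> epsM smul"
  define p q where "p = coord_re x" and "q = coord_re y"
  have "vcross p q k = 0" if "k < 3" for k
    using \<open>cross smul sp OR x y \<in> epsM smul\<close> that
    by (simp add: epsM_iff_coord_re coord_re_def coord_cross re_vcross p_def q_def)
  then have "vcross (vcross p q) p k = 0" for k
    by (simp add: vcross_def[of "vcross p q"])
  then have parallel: "vdot p p * q k = vdot p q * p k" if "k < 3" for k
    using vcross_vcross[OF that, of p q p] by (simp add: vdot_commute[of q])
  have "smul (eps * dreal (vdot p q)) x + smul (- (eps * dreal (vdot p p))) y = 0"
    using parallel by (intro coord_eqI) (simp add: dual_eq_iff p_def q_def coord_re_def)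
  then have "eps * dreal (vdot p p) = 0"
    using xy unfolding dindep2_def by (metis neg_equal_0_iff_equal)
  moreover have "vdot p p > 0"
    using dindep2_not_epsM[OF xy] by (intro vdot_self_pos) (auto simp: epsM_iff_coord_re p_def)
  ultimately show False
    by (simp add: dual_eq_iff)
qed

lemma sp_cross_eq_0_imp_dcomb:
  assumes xy: "dindep2 smul x y" and triple: "sp (cross smul sp OR x y) z = 0"
  shows "dcomb smul z x y"
proof -
  define a b c where "a = coord x" and "b = coord y" and "c = coord z"
  define N where "N = vdot a a * vdot b b - vdot a b * vdot a b"
  have "re N = vdot (coord_re (cross smul sp OR x y)) (coord_re (cross smul sp OR x y))"
    unfolding N_def lagrange_identity re_vdot
    by (simp add: vdot_def coord_re_def coord_cross a_def b_def)
  also have "\<dots> > 0"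
    using cross_not_epsM[OF xy] by (intro vdot_self_pos) (auto simp: epsM_iff_coord_re)
  finally have N: "dual_inverse N * N = 1"
    by (simp add: dual_inverse_left)
  define \<alpha> \<beta> where "\<alpha> = vdot c a * vdot b b - vdot c b * vdot a b"
    and "\<beta> = vdot c b * vdot a a - vdot c a * vdot a b"
  have "z = smul (dual_inverse N * \<alpha>) x + smul (dual_inverse N * \<beta>) y"
  proof (rule coord_eqI)
    fix k :: nat assume "k < 3"
    have "N * c k = \<alpha> * a k + \<beta> * b k"
      using gram_expansion[OF \<open>k < 3\<close>, of a b c] triple
      by (simp add: N_def \<alpha>_def \<beta>_def a_def b_def c_def sp_cross)
    then have "(dual_inverse N * N) * c k = dual_inverse N * (\<alpha> * a k + \<beta> * b k)"
      by (simp add: mult.assoc)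
    then have "c k = dual_inverse N * (\<alpha> * a k + \<beta> * b k)"
      by (simp only: N mult_1)
    then show "coord z k = coord (smul (dual_inverse N * \<alpha>) x + smul (dual_inverse N * \<beta>) y) k"
      by (simp add: a_def b_def c_def algebra_simps)
  qed
  then show ?thesis
    unfolding dcomb_def by blast
qed

lemma dcomb_exchange:
  assumes "dcomb smul x y z" and yx: "dindep2 smul y x"
  shows "dcomb smul z x y"
proof -
  obtain a b where x: "x = smul a y + smul b z"
    using assms(1) unfolding dcomb_def by blast
  have "re b \<noteq> 0"
  proof
    assume "re b = 0"
    then have "eps * b = 0"
      by (simp add: eps_mult_eq_0_iff)
    then have "smul (- (eps * a)) y + smul eps x = 0"
      by (simp add: x scale_right_distrib)
    then have "eps = 0"
      using yx unfolding dindep2_def by blast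
    then show False
      by (simp add: dual_eq_iff)
  qed
  then have "smul (dual_inverse b * b) z = z"
    by (simp add: dual_inverse_left)
  then have "z = smul (dual_inverse b) x + smul (- (dual_inverse b * a)) y"
    by (simp add: x scale_right_distrib)
  then show ?thesis
    unfolding dcomb_def by blast
qed

lemma sp_cross_eq_0_if_dcomb:
  assumes "dcomb smul x y z \<or> dcomb smul y x z \<or> dcomb smul z x y"
  shows "sp (cross smul sp OR x y) z = 0"
  using assms unfolding dcomb_def sp_cross
  by (elim disjE exE) (simp_all add: vdot_def vcross_def algebra_simps)

lemma sp_cross_eq_0_imp_all_dcomb:
  assumes "dindep2 smul z1 z2" "dindep2 smul z1 z3" "dindep2 smul z2 z3"
    and "sp (cross smul sp OR z1 z2) z3 = 0"
  shows "dcomb smul z1 z2 z3 \<and> dcomb smul z2 z1 z3 \<and> dcomb smul z3 z1 z2"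
proof -
  have "dcomb smul z3 z1 z2"
    using sp_cross_eq_0_imp_dcomb[OF assms(1,4)] .
  moreover have "dcomb smul z3 z2 z1"
    using calculation unfolding dcomb_def by (metis add.commute)
  ultimately show ?thesis
    using dcomb_exchange assms(1-3) dindep2_commute by blast
qed

section \<open>The Euclidean space E\<close>

lemma epsM_diff: "x \<in> epsM smul \<Longrightarrow> y \<in> epsM smul \<Longrightarrow> x - y \<in> epsM smul"
  by (simp add: epsM_iff_coord_re coord_re_def)

lemma Espace_diff: "P \<in> Espace smul sp \<Longrightarrow> x \<in> P \<Longrightarrow> y \<in> P \<Longrightarrow> x - y \<in> P"
  unfolding Espace_def real_subspace_def
  by (metis (no_types, lifting) mem_Collect_eq dreal_simps(2,3) scale_minus_left scale_one
      diff_conv_add_uminus)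

lemma Espace_sum3:
  fixes v :: "nat \<Rightarrow> 'm"
  shows "P \<in> Espace smul sp \<Longrightarrow> (\<And>i. i < 3 \<Longrightarrow> v i \<in> P) \<Longrightarrow>
    (\<Sum>i<3. smul (dreal (c i)) (v i)) \<in> P"
  unfolding Espace_def real_subspace_def sum3 by simp

lemma Espace_epsM: "P \<in> Espace smul sp \<Longrightarrow> x \<in> P \<Longrightarrow> x \<in> epsM smul \<Longrightarrow> x = 0"
  unfolding Espace_def by blast

lemma lift_eqI:
  assumes P: "P \<in> Espace smul sp" and y: "y \<in> P" "y - x \<in> epsM smul"
  shows "lift smul P x = y"
  unfolding lift_def
proof (rule the_equality)
  fix y' assume y': "y' \<in> P \<and> y' - x \<in> epsM smul"
  have "y' - y = (y' - x) - (y - x)"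
    by simp
  then have "y' - y \<in> epsM smul"
    using epsM_diff y' y by metis
  then show "y' = y"
    using Espace_epsM[OF P Espace_diff[OF P]] y y' by auto
qed (use y in blast)

text \<open>A dual vector with real part p and dual part c \<times> p is the line through c with direction p
  (Pluecker coordinates), so \<open>E_point c\<close> is the element of E that is the point c of the
  Euclidean space; \<open>Espace_eq_E_point\<close> shows that every element of E arises this way.\<close>

definition E_point :: "(nat \<Rightarrow> real) \<Rightarrow> 'm set" where
  "E_point c = {x. \<forall>l<3. coord_du x l = vcross c (coord_re x) l}"

definition E_vec :: "(nat \<Rightarrow> real) \<Rightarrow> (nat \<Rightarrow> real) \<Rightarrow> 'm" where
  "E_vec c p = comb3 frame (\<lambda>l. Dual (p l) (vcross c p l))"

definition unit_coords :: "nat \<Rightarrow> nat \<Rightarrow> real" where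
  "unit_coords i = (\<lambda>k. if k = i then 1 else 0)"

lemma coord_E_vec: "l < 3 \<Longrightarrow> coord (E_vec c p) l = Dual (p l) (vcross c p l)"
  by (simp add: E_vec_def coord_comb3)

lemma coord_re_E_vec: "l < 3 \<Longrightarrow> coord_re (E_vec c p) l = p l"
  by (simp add: coord_re_def coord_E_vec)

lemma vcross_coord_re_E_vec: "vcross c (coord_re (E_vec c' p)) = vcross c p"
  by (simp add: vcross_def coord_re_E_vec fun_eq_iff)

lemma E_vec_mem: "E_vec c p \<in> E_point c"
  by (simp add: E_point_def coord_du_def coord_E_vec vcross_coord_re_E_vec)

lemma E_point_eq_E_vec: "x \<in> E_point c \<Longrightarrow> x = E_vec c (coord_re x)"
  by (intro coord_eqI) (simp add: E_point_def coord_E_vec dual_eq_iff coord_re_def coord_du_def)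

lemma E_point_cong: "(\<And>k. k < 3 \<Longrightarrow> c k = c' k) \<Longrightarrow> E_point c = E_point c'"
  using vcross_cong[of c c'] unfolding E_point_def by simp

lemma E_point_iff: "x \<in> E_point c \<longleftrightarrow> (\<exists>p. x = E_vec c p)"
  using E_point_eq_E_vec E_vec_mem by blast

lemma E_vec_cong: "(\<And>k. k < 3 \<Longrightarrow> p k = p' k) \<Longrightarrow> E_vec c p = E_vec c p'"
  by (intro coord_eqI) (simp add: coord_E_vec vcross_def)

lemma E_vec_add: "E_vec c p + E_vec c q = E_vec c (\<lambda>k. p k + q k)"
  by (rule coord_eqI) (simp add: coord_E_vec dual_eq_iff vcross_def algebra_simps)

lemma E_vec_scale: "smul (dreal r) (E_vec c p) = E_vec c (\<lambda>k. r * p k)"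
  by (rule coord_eqI) (simp add: coord_E_vec dual_eq_iff vcross_def algebra_simps)

lemma E_vec_zero: "E_vec c (\<lambda>k. 0) = 0"
  by (rule coord_eqI) (simp add: coord_E_vec dual_eq_iff vcross_def)

lemma real_dim3_E_point: "real_dim3 smul (E_point c)"
  unfolding real_dim3_def
proof (intro exI[of _ "\<lambda>i. E_vec c (unit_coords i)"] conjI allI ballI impI)
  show "E_vec c (unit_coords i) \<in> E_point c" for i
    by (rule E_vec_mem)
  show "\<exists>r. x = (\<Sum>i<3. smul (dreal (r i)) (E_vec c (unit_coords i)))" if "x \<in> E_point c" for x
  proof (intro exI[of _ "coord_re x"] coord_eqI)
    fix l :: nat assume "l < 3"
    then show "coord x l = coord (\<Sum>i<3. smul (dreal (coord_re x i)) (E_vec c (unit_coords i))) l"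
      by (subst E_point_eq_E_vec[OF that], elim less3_cases)
        (simp_all add: sum3 coord_E_vec coord_re_E_vec dual_eq_iff vcross_def unit_coords_def)
  qed
  show "r i = 0" if "(\<Sum>i<3. smul (dreal (r i)) (E_vec c (unit_coords i))) = 0" "i < 3" for r i
    using arg_cong[OF that(1), of "\<lambda>x. coord_re x i"] that(2)
    by (elim less3_cases) (simp_all add: coord_re_def sum3 coord_E_vec unit_coords_def)
qed

lemma E_point_in_Espace: "E_point c \<in> Espace smul sp"
proof -
  have zero: "0 \<in> E_point c"
    using E_vec_mem[of c "\<lambda>k. 0"] by (simp add: E_vec_zero)
  have "real_subspace smul (E_point c)"
    unfolding real_subspace_def
  proof (intro conjI ballI allI zero)
    show "x + y \<in> E_point c" if "x \<in> E_point c" "y \<in> E_point c" for x y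
      using that by (auto simp: E_point_iff E_vec_add)
    show "smul (dreal r) x \<in> E_point c" if "x \<in> E_point c" for r x
      using that by (auto simp: E_point_iff E_vec_scale)
  qed
  moreover note real_dim3_E_point
  moreover have "du (sp x y) = 0" if "x \<in> E_point c" "y \<in> E_point c" for x y
    using that unfolding E_point_iff
    by (auto simp: sp_eq_vdot vdot_def coord_E_vec vcross_def algebra_simps)
  moreover have "x = 0" if "x \<in> E_point c" "x \<in> epsM smul" for x
  proof -
    have "x = E_vec c (coord_re x)"
      using E_point_eq_E_vec[OF that(1)] .
    also have "\<dots> = E_vec c (\<lambda>k. 0)"
      using that(2) by (intro E_vec_cong) (simp add: epsM_iff_coord_re)
    finally show ?thesis
      by (simp add: E_vec_zero)
  qed
  moreover have "0 \<in> epsM smul"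
    by (simp add: epsM_iff_coord_re coord_re_def)
  ultimately show ?thesis
    using zero unfolding Espace_def by blast
qed

lemma lift_E_point_frame: "i < 3 \<Longrightarrow> lift smul (E_point c) (frame i) = E_vec c (unit_coords i)"
  by (rule lift_eqI[OF E_point_in_Espace E_vec_mem])
    (auto simp: epsM_iff_coord_re coord_re_def coord_E_vec coord_frame unit_coords_def)

lemma Espace_coord_re_surj:
  assumes P: "P \<in> Espace smul sp"
  shows "\<exists>y\<in>P. \<forall>k<3. coord_re y k = t k"
proof -
  obtain v :: "nat \<Rightarrow> 'm" where v: "\<And>i. i < 3 \<Longrightarrow> v i \<in> P"
    and indep: "\<And>c. (\<Sum>i<3. smul (dreal (c i)) (v i)) = 0 \<Longrightarrow> \<forall>i<3. c i = 0"
    using P unfolding Espace_def real_dim3_def by blast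
  have coord_re_sum: "coord_re (\<Sum>i<3. smul (dreal (c i)) (v i)) k = (\<Sum>i<3. c i * coord_re (v i) k)"
    for c k by (simp add: coord_re_def)
  have "\<exists>c. \<forall>k<3. (\<Sum>i<3. c i * coord_re (v i) k) = t k"
  proof (rule real3_inj_imp_surj)
    fix c assume "\<forall>k<3. (\<Sum>i<3. c i * coord_re (v i) k) = 0"
    then have "(\<Sum>i<3. smul (dreal (c i)) (v i)) \<in> epsM smul"
      by (simp add: epsM_iff_coord_re coord_re_sum)
    then show "\<forall>i<3. c i = 0"
      using indep Espace_epsM[OF P Espace_sum3[where v = v, OF P v]] by blast
  qed
  then show ?thesis
    using Espace_sum3[where v = v, OF P v] by (metis coord_re_sum)
qed

lemma Espace_unit_lifts:
  assumes P: "P \<in> Espace smul sp"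
  obtains f where "\<And>i. f i \<in> P" "\<And>i k. k < 3 \<Longrightarrow> coord_re (f i) k = unit_coords i k"
proof -
  have "\<forall>i. \<exists>y. y \<in> P \<and> (\<forall>k<3. coord_re y k = unit_coords i k)"
    using Espace_coord_re_surj[OF P] by blast
  then show ?thesis
    using that by metis
qed

lemma Espace_expansion:
  assumes P: "P \<in> Espace smul sp" and f: "\<And>i. i < 3 \<Longrightarrow> f i \<in> P"
    and f_re: "\<And>i k. i < 3 \<Longrightarrow> k < 3 \<Longrightarrow> coord_re (f i) k = unit_coords i k"
    and x: "x \<in> P"
  shows "x = (\<Sum>i<3. smul (dreal (coord_re x i)) (f i))"
proof -
  let ?y = "\<Sum>i<3. smul (dreal (coord_re x i)) (f i)"
  have "coord_re ?y k = coord_re x k" if "k < 3" for k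
    using that by (elim less3_cases) (simp_all add: coord_re_def sum3 f_re[unfolded coord_re_def]
        unit_coords_def)
  then have "x - ?y \<in> epsM smul"
    by (simp add: epsM_iff_coord_re coord_re_def)
  then show ?thesis
    using Espace_epsM[OF P Espace_diff[OF P x Espace_sum3[where v = f, OF P f]]] by simp
qed

lemma Espace_subsetI:
  assumes P: "P \<in> Espace smul sp" and Q: "Q \<in> Espace smul sp"
    and f_P: "\<And>i. i < 3 \<Longrightarrow> f i \<in> P" and f_Q: "\<And>i. i < 3 \<Longrightarrow> f i \<in> Q"
    and f_re: "\<And>i k. i < 3 \<Longrightarrow> k < 3 \<Longrightarrow> coord_re (f i) k = unit_coords i k"
  shows "P \<subseteq> Q"
proof
  fix x assume "x \<in> P"
  with P f_P f_re have "x = (\<Sum>i<3. smul (dreal (coord_re x i)) (f i))"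
    by (rule Espace_expansion)
  also have "\<dots> \<in> Q"
    by (rule Espace_sum3[where v = f, OF Q f_Q])
  finally show "x \<in> Q" .
qed

lemma Espace_eq_E_point:
  assumes P: "P \<in> Espace smul sp"
  obtains c where "P = E_point c"
proof -
  obtain f where f: "\<And>i. f i \<in> P" and f_re: "\<And>i k. k < 3 \<Longrightarrow> coord_re (f i) k = unit_coords i k"
    using Espace_unit_lifts[OF P] by blast
  define G where "G i l = coord_du (f i) l" for i l
  have G_antisym: "G i l = - G l i" if "i < 3" "l < 3" for i l
  proof -
    have "du (sp (f i) (f l)) = 0"
      using P f unfolding Espace_def by blast
    then show ?thesis
      using that by (elim less3_cases) (simp_all add: du_sp vdot_def f_re unit_coords_def G_def)
  qed
  define c where "c k = (if k = 0 then G 1 2 else if k = 1 then G 2 0 else G 0 1)" for k :: nat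
  have f_E_point: "f i \<in> E_point c" if "i < 3" for i
    unfolding E_point_def
  proof (intro CollectI allI impI)
    fix l :: nat assume "l < 3"
    have "G i l = vcross c (unit_coords i) l"
      using that \<open>l < 3\<close> G_antisym[of 0 0] G_antisym[of 1 1] G_antisym[of 2 2]
        G_antisym[of 1 0] G_antisym[of 0 2] G_antisym[of 2 1]
      by (elim less3_cases) (simp_all add: c_def vcross_def unit_coords_def)
    also have "\<dots> = vcross c (coord_re (f i)) l"
      using f_re by (simp add: vcross_def unit_coords_def)
    finally show "coord_du (f i) l = vcross c (coord_re (f i)) l"
      by (simp add: G_def)
  qed
  have "P = E_point c"
    using Espace_subsetI[OF P E_point_in_Espace f f_E_point f_re]
      Espace_subsetI[OF E_point_in_Espace P f_E_point f f_re] by blast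
  then show ?thesis
    by (rule that)
qed

lemma diffE_E_point_iff:
  "diffE smul sp OR (E_point b) (E_point a) v \<longleftrightarrow> (\<forall>k<3. coord_re v k = b k - a k)"
proof -
  have shift: "(\<forall>i<3. E_vec b (unit_coords i) = E_vec a (unit_coords i) +
      smul eps (\<Sum>j<3. \<Sum>k<3. smul (dreal (levi i j k * d k)) (E_vec a (unit_coords j))))
    \<longleftrightarrow> (\<forall>k<3. d k = b k - a k)" for d
    by (simp add: eq_iff_coord all3 sum3 coord_E_vec dual_eq_iff levi_def vcross_def
        unit_coords_def) linarith
  have "v - (\<Sum>k<3. smul (dreal (d k)) (frame k)) \<in> epsM smul \<longleftrightarrow> (\<forall>k<3. coord_re v k = d k)"
    for d by (simp add: epsM_iff_coord_re all3 sum3 coord_re_def coord_frame)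
  then show ?thesis
    unfolding diffE_def Let_def frame_def[symmetric]
    by (simp add: lift_E_point_frame shift cong: all_cong) (auto intro!: exI[of _ "\<lambda>k. b k - a k"])
qed

lemma lineE_E_point_iff:
  "B \<in> lineE smul sp OR (E_point a) w \<longleftrightarrow> (\<exists>t. B = E_point (\<lambda>k. a k + t * coord_re w k))"
proof
  assume "B \<in> lineE smul sp OR (E_point a) w"
  then obtain t where B: "B \<in> Espace smul sp" and "diffE smul sp OR B (E_point a) (smul (dreal t) w)"
    by (auto simp: lineE_def)
  moreover obtain b where "B = E_point b"
    using Espace_eq_E_point[OF B] by blast
  ultimately have "\<forall>k<3. t * coord_re w k = b k - a k"
    by (simp add: diffE_E_point_iff coord_re_def)
  then have "B = E_point (\<lambda>k. a k + t * coord_re w k)"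
    unfolding \<open>B = E_point b\<close> by (intro E_point_cong) simp
  then show "\<exists>t. B = E_point (\<lambda>k. a k + t * coord_re w k)" ..
qed (auto simp: lineE_def E_point_in_Espace diffE_E_point_iff coord_re_def)

section \<open>Axes meeting a common perpendicular\<close>

lemma sp_E_vec_eq_0_if_meets_orthogonally:
  assumes "u \<in> E_point (\<lambda>k. a k + t * r k)" and "vdot (coord_re u) r = 0"
  shows "sp u (E_vec a r) = 0"
proof -
  obtain p where u: "u = E_vec (\<lambda>k. a k + t * r k) p"
    using assms(1) E_point_iff by blast
  have "vdot p r = 0"
    using assms(2) by (simp add: u vdot_def coord_re_E_vec)
  then show ?thesis
    by (simp add: u sp_eq_vdot vdot_def coord_E_vec dual_eq_iff vcross_def algebra_simps)
qed

lemma sp_cross_eq_0_if_common_orthogonal: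
  assumes "sp x L = 0" "sp y L = 0" "sp z L = 0" and L: "L \<notin> epsM smul"
  shows "sp (cross smul sp OR x y) z = 0"
proof -
  obtain k where k: "k < 3" and "coord_re L k \<noteq> 0"
    using L by (auto simp: epsM_iff_coord_re)
  moreover have "vdot (vcross (coord x) (coord y)) (coord z) * coord L k = 0"
    using triple_product_expansion[OF k, of "coord x" "coord y" "coord z" "coord L"] assms(1-3)
    by (simp add: sp_eq_vdot)
  then have "sp (cross smul sp OR x y) z * coord L k = 0"
    by (simp only: sp_cross)
  ultimately show ?thesis
    by (simp add: mult.commute[of _ "coord L k"] dual_mult_eq_0_iff_right coord_re_def)
qed

lemma axes_meet_common_perp_imp_sp_cross_eq_0:
  assumes z: "z1 \<notin> epsM smul" "z2 \<notin> epsM smul" "z3 \<notin> epsM smul"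
    and "axes_meet_common_perp smul sp OR z1 z2 z3"
  shows "sp (cross smul sp OR z1 z2) z3 = 0"
proof -
  obtain A w where A: "A \<in> Espace smul sp" and w: "w \<notin> epsM smul"
    and meet: "\<And>z. z \<in> {z1, z2, z3} \<Longrightarrow> axis smul sp z \<inter> lineE smul sp OR A w \<noteq> {}"
    and orth: "\<And>z. z \<in> {z1, z2, z3} \<Longrightarrow> orthV sp (unit_part smul sp z) w"
    using assms(4) unfolding axes_meet_common_perp_def by blast
  obtain a where A_a: "A = E_point a"
    using Espace_eq_E_point[OF A] by blast
  define L where "L = E_vec a (coord_re w)"
  have "sp z L = 0" if z_in: "z \<in> {z1, z2, z3}" for z
  proof -
    obtain B where "B \<in> axis smul sp z" and "B \<in> lineE smul sp OR A w"
      using meet[OF z_in] by blast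
    then obtain t where "unit_part smul sp z \<in> E_point (\<lambda>k. a k + t * coord_re w k)"
      by (auto simp: axis_def A_a lineE_E_point_iff)
    moreover have "vdot (coord_re (unit_part smul sp z)) (coord_re w) = 0"
      using orth[OF z_in] by (simp add: orthV_def re_sp)
    ultimately have "sp (unit_part smul sp z) L = 0"
      unfolding L_def by (rule sp_E_vec_eq_0_if_meets_orthogonally)
    then show ?thesis
      using z z_in sp_unit_part_eq_0_iff by blast
  qed
  moreover have "L \<notin> epsM smul"
    using w by (simp add: L_def epsM_iff_coord_re coord_re_E_vec)
  ultimately show ?thesis
    by (intro sp_cross_eq_0_if_common_orthogonal) auto
qed

text \<open>The point a is the foot of the perpendicular from the origin to the axis of n.\<close>

lemma orthogonal_unit_meets_axis:
  assumes n: "n \<notin> epsM smul" and u: "sp u u = 1" and un: "sp u n = 0"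
  defines "a \<equiv> \<lambda>k. vcross (coord_re n) (coord_du n) k / vdot (coord_re n) (coord_re n)"
  obtains t where "u \<in> E_point (\<lambda>k. a k + t * coord_re n k)"
proof -
  define p q r s where "p = coord_re u" and "q = coord_du u" and "r = coord_re n" and "s = coord_du n"
  have R: "vdot r r > 0"
    using n by (intro vdot_self_pos) (auto simp: epsM_iff_coord_re r_def)
  have pp: "vdot p p = 1" and qp: "vdot q p = 0"
    using arg_cong[OF u, of re] arg_cong[OF u, of du]
    by (simp_all add: re_sp du_sp p_def q_def vdot_commute[of "coord_re u" "coord_du u"])
  have rp: "vdot r p = 0" and s_p: "vdot s p = - vdot q r"
    using arg_cong[OF un, of re] arg_cong[OF un, of du]
    by (simp_all add: re_sp du_sp p_def q_def r_def s_def vdot_commute[of "coord_re u" "coord_re n"]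
        vdot_commute[of "coord_re u" "coord_du n"])
  define t where "t = vdot (vcross p q) r / vdot r r"
  have "q l = vcross (\<lambda>k. a k + t * r k) p l" if "l < 3" for l
  proof -
    have "vcross (\<lambda>k. a k + t * r k) p l = vcross (vcross r s) p l / vdot r r + t * vcross r p l"
      using R by (simp add: a_def t_def r_def s_def vcross_def field_simps)
    also have "\<dots> = q l"
      using moment_identity[OF that pp qp rp s_p] R by (simp add: t_def field_simps)
    finally show ?thesis ..
  qed
  then have "u \<in> E_point (\<lambda>k. a k + t * coord_re n k)"
    by (simp add: E_point_def p_def q_def r_def)
  then show ?thesis
    by (rule that)
qed

lemma sp_cross_eq_0_imp_axes_meet_common_perp:
  assumes z12: "dindep2 smul z1 z2"
    and z: "z1 \<notin> epsM smul" "z2 \<notin> epsM smul" "z3 \<notin> epsM smul"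
    and triple: "sp (cross smul sp OR z1 z2) z3 = 0"
  shows "axes_meet_common_perp smul sp OR z1 z2 z3"
proof -
  define n where "n = cross smul sp OR z1 z2"
  have n: "n \<notin> epsM smul"
    unfolding n_def by (rule cross_not_epsM[OF z12])
  define a where "a k = vcross (coord_re n) (coord_du n) k / vdot (coord_re n) (coord_re n)" for k
  have "sp z1 n = 0" "sp z2 n = 0" "sp z3 n = 0"
    using triple vdot_vcross_self[of "coord z1" "coord z2"]
    by (simp_all add: n_def sp_commute[of _ "cross smul sp OR z1 z2"] sp_cross vdot_vcross_cyclic
        vdot_commute[of _ "vcross (coord z1) (coord z2)"])
  moreover have "axis smul sp z \<inter> lineE smul sp OR (E_point a) n \<noteq> {} \<and>
      orthV sp (unit_part smul sp z) n" if z: "z \<notin> epsM smul" and zn: "sp z n = 0" for z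
  proof -
    have u: "sp (unit_part smul sp z) (unit_part smul sp z) = 1"
      using unit_partE[OF z] by blast
    have un: "sp (unit_part smul sp z) n = 0"
      using sp_unit_part_eq_0_iff[OF z] zn by blast
    obtain t where "unit_part smul sp z \<in> E_point (\<lambda>k. a k + t * coord_re n k)"
      using orthogonal_unit_meets_axis[OF n u un] unfolding a_def by blast
    then have "E_point (\<lambda>k. a k + t * coord_re n k) \<in> axis smul sp z \<inter> lineE smul sp OR (E_point a) n"
      by (auto simp: axis_def E_point_in_Espace lineE_E_point_iff)
    moreover have "orthV sp (unit_part smul sp z) n"
      using un by (simp add: orthV_def)
    ultimately show ?thesis
      by blast
  qed
  ultimately show ?thesis
    unfolding axes_meet_common_perp_def using E_point_in_Espace n z by blast
qed

end

theorem proposition15: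
  fixes smul :: "dual \<Rightarrow> 'm::ab_group_add \<Rightarrow> 'm"
    and sp :: "'m \<Rightarrow> 'm \<Rightarrow> dual"
    and OR :: "(nat \<Rightarrow> 'm) set"
    and z1 z2 z3 :: 'm
  assumes "module smul"
    and "free_rank3 smul"
    and "scalar_product smul sp"
    and "orientation smul OR"
    and "z1 \<notin> epsM smul" and "z2 \<notin> epsM smul" and "z3 \<notin> epsM smul"
    and "dindep2 smul z1 z2" and "dindep2 smul z1 z3" and "dindep2 smul z2 z3"
  shows "(sp (cross smul sp OR z1 z2) z3 = 0
            \<longleftrightarrow> dcomb smul z1 z2 z3 \<or> dcomb smul z2 z1 z3 \<or> dcomb smul z3 z1 z2)
       \<and> ((dcomb smul z1 z2 z3 \<or> dcomb smul z2 z1 z3 \<or> dcomb smul z3 z1 z2)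
            \<longleftrightarrow> axes_meet_common_perp smul sp OR z1 z2 z3)
       \<and> (sp (cross smul sp OR z1 z2) z3 = 0
            \<longrightarrow> dcomb smul z1 z2 z3 \<and> dcomb smul z2 z1 z3 \<and> dcomb smul z3 z1 z2)"
proof -
  interpret dual_euclidean_module smul sp OR
    using assms(1,3,4) by (simp add: dual_euclidean_module_def dual_euclidean_module_axioms_def)
  show ?thesis
    using sp_cross_eq_0_imp_all_dcomb[OF assms(8-10)] sp_cross_eq_0_if_dcomb
      sp_cross_eq_0_imp_axes_meet_common_perp[OF assms(8,5-7)]
      axes_meet_common_perp_imp_sp_cross_eq_0[OF assms(5-7)]
    by blast
qed

end
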